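(* Let $\sigma>1$ and $a>0$ with $\sigma e^{-a}>1$. Define a sequence $(\rho^*_k)_{k\ge0}$ by the recurrence $$\rho^*_0=\frac{\sigma e^{-a}-1}{\sigma-1},\qquad \rho^*_k=\frac{e^{-a}}{(\sigma-1)\rho^*_0+1-e^{-a}}\Big(\sigma\frac{a^k}{k!}\rho^*_0+\sum_{l=1}^{k-1}\frac{a^{k-l}}{(k-l)!}\rho^*_l\Big),\quad k\ge1.$$ Then its generating function is $\sum_{k\ge0}\rho^*_kX^k=(\sigma e^{-a}-1)\dfrac{e^{aX}}{\sigma-e^{aX}}$, and for every $k\ge0$ $$\rho^*_k=(\sigma e^{-a}-1)\frac{a^k}{k!}\sum_{i\ge1}\frac{i^k}{\sigma^i}.$$ Moreover $\sum_{k\ge0}\rho^*_k=1$, so $(\rho^*_k)_{k\ge0}$ is a probability distribution on $\mathbb N$, whose expectation and variance are $$\frac{\sigma a e^{-a}}{\sigma e^{-a}-1}\qquad\text{and}\qquad \frac{\sigma a e^{-a}(\sigma e^{-a}+a-1)}{(\sigma e^{-a}-1)^2}.$$ *)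

theory Defs
  imports "HOL-Analysis.Analysis" "HOL-Computational_Algebra.Formal_Power_Series"
begin

end

theory Submission
  imports Defs
begin

text \<open>
  The recurrence is the coefficientwise form of
  \<open>\<rho>(X) (\<sigma> - e\<^sup>a\<^sup>X) = (\<sigma>e\<^sup>-\<^sup>a - 1) e\<^sup>a\<^sup>X\<close>,
  and \<open>\<sigma> - e\<^sup>a\<^sup>X\<close> has the nonzero constant term \<open>\<sigma> - 1\<close>, so it suffices to check
  that the explicit sequence satisfies the same identity; after exchanging the finite convolution
  with the series over \<open>i\<close>, this is the binomial theorem for \<open>(a + a i)\<^sup>k/k!\<close>.
  Summing the explicit formula over \<open>k\<close> first (Tonelli for nonnegative double series) turns
  the exponential series into \<open>e\<^sup>a\<^sup>i\<close>, so the total mass and the moments reduce to the series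
  \<open>\<Sum> i\<^sup>j q\<^sup>i\<close>, \<open>j \<le> 2\<close>, with \<open>q = e\<^sup>a/\<sigma> < 1\<close>.
\<close>

lemma sums_swap_nonneg:
  fixes f :: "nat \<Rightarrow> nat \<Rightarrow> real"
  assumes nonneg: "\<And>k i. f k i \<ge> 0"
    and inner: "\<And>i. (\<lambda>k. f k i) sums u i" and outer: "u sums s"
  shows "(\<lambda>k. \<Sum>i. f k i) sums s"
proof -
  have hi: "((\<lambda>k. f k i) has_sum u i) UNIV" for i
    by (rule sums_nonneg_imp_has_sum[OF inner nonneg])
  have "u i \<ge> 0" for i
    using sums_le[of "\<lambda>_. 0" "\<lambda>k. f k i" 0 "u i"] inner nonneg by auto
  then have hu: "(u has_sum s) UNIV"
    by (rule sums_nonneg_imp_has_sum[OF outer])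
  have "(\<lambda>(i, k). f k i) summable_on UNIV \<times> UNIV"
    by (rule summable_on_SigmaI[where g = u]) (use hi hu nonneg in \<open>auto simp: summable_on_def\<close>)
  then have "((\<lambda>(i, k). f k i) has_sum s) (UNIV \<times> UNIV)"
    by (intro has_sum_SigmaI[where g = u]) (use hi hu in auto)
  then have swapped: "((\<lambda>(k, i). f k i) has_sum s) (UNIV \<times> UNIV)"
    by (subst has_sum_swap) simp
  have row: "f k summable_on UNIV" for k
    using summable_on_SigmaD1[of "\<lambda>k i. f k i" UNIV "\<lambda>_. UNIV" k] swapped
    by (auto simp: summable_on_def)
  have "((\<lambda>k. infsum (f k) UNIV) has_sum s) UNIV"
    by (rule has_sum_Sigma'[OF swapped[unfolded case_prod_unfold]]) (use row in \<open>simp add: has_sum_infsum\<close>)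
  moreover have "infsum (f k) UNIV = (\<Sum>i. f k i)" for k
    using row[of k] by (metis has_sum_imp_sums has_sum_infsum sums_unique)
  ultimately show ?thesis
    by (metis (no_types, lifting) ext has_sum_imp_sums)
qed

lemma sums_exp_series: "(\<lambda>k. x ^ k / fact k) sums exp (x::real)"
  using exp_converges[of x] by (simp add: divide_inverse mult.commute)

lemma sums_of_nat_mult_exp_series: "(\<lambda>k. real k * (x ^ k / fact k)) sums (x * exp (x::real))"
proof -
  have "(\<lambda>k. x * (x ^ k / fact k)) sums (x * exp x)"
    by (rule sums_mult[OF sums_exp_series])
  moreover have "x * (x ^ k / fact k) = real (Suc k) * (x ^ Suc k / fact (Suc k))" for k
    by (simp add: field_simps del: of_nat_Suc)
  ultimately show ?thesis
    using sums_Suc_iff[of "\<lambda>k. real k * (x ^ k / fact k)"] by simp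
qed

lemma sums_of_nat_power2_mult_exp_series:
  "(\<lambda>k. (real k)\<^sup>2 * (x ^ k / fact k)) sums (x * (x + 1) * exp (x::real))"
proof -
  have "(\<lambda>k. x * (real k * (x ^ k / fact k) + x ^ k / fact k)) sums (x * (x * exp x + exp x))"
    by (rule sums_mult[OF sums_add[OF sums_of_nat_mult_exp_series sums_exp_series]])
  moreover have "x * (real k * (x ^ k / fact k) + x ^ k / fact k)
      = (real (Suc k))\<^sup>2 * (x ^ Suc k / fact (Suc k))" for k
    by (simp add: field_simps power2_eq_square del: of_nat_Suc) (simp add: algebra_simps)
  ultimately show ?thesis
    using sums_Suc_iff[of "\<lambda>k. (real k)\<^sup>2 * (x ^ k / fact k)"] by (simp add: algebra_simps)
qed

lemma exp_mult_of_nat_div_power: "exp (x * real n) / y ^ n = (exp x / y) ^ n"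
  by (metis exp_of_nat_mult mult.commute power_divide)

lemma power_div_fact_le_exp:
  assumes "x \<ge> 0"
  shows "x ^ k / fact k \<le> exp (x::real)"
proof -
  have "(\<Sum>j\<in>{k}. x ^ j / fact j) \<le> (\<Sum>j. x ^ j / fact j)"
    by (rule sum_le_suminf) (use sums_exp_series assms in \<open>auto simp: sums_iff\<close>)
  then show ?thesis
    using sums_exp_series[of x] by (simp add: sums_iff)
qed

lemma summable_power_div_power:
  assumes "(\<sigma>::real) > 1"
  shows "summable (\<lambda>n. real n ^ k / \<sigma> ^ n)"
proof -
  define t where "t = sqrt \<sigma>"
  have t: "t > 1" "\<sigma> = t\<^sup>2"
    using assms by (auto simp: t_def)
  define b where "b = ln t"
  have b: "b > 0" "exp b = t"
    using t by (auto simp: b_def)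
  have bound: "real n ^ k / \<sigma> ^ n \<le> fact k / b ^ k * (1 / t) ^ n" for n
  proof -
    have "real n ^ k = (b * real n) ^ k / fact k * fact k / b ^ k"
      using b by (simp add: power_mult_distrib)
    also have "\<dots> \<le> exp (b * real n) * fact k / b ^ k"
      using b by (intro divide_right_mono mult_right_mono power_div_fact_le_exp) auto
    also have "exp (b * real n) = t ^ n"
      using exp_mult_of_nat_div_power[of b n 1] b by simp
    finally have "real n ^ k \<le> t ^ n * fact k / b ^ k" .
    moreover have "\<sigma> ^ n = t ^ n * t ^ n"
      by (simp add: t(2) power2_eq_square power_mult_distrib)
    ultimately show ?thesis
      using t by (simp add: field_simps power_divide)
  qed
  have "summable (\<lambda>n. fact k / b ^ k * (1 / t) ^ n)"
    using t by (intro summable_mult summable_geometric) auto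
  then show ?thesis
    by (rule summable_comparison_test'[where N = 0]) (use bound assms in auto)
qed

lemma sums_of_nat_mult_geometric:
  assumes "\<bar>q\<bar> < (1::real)"
  shows "(\<lambda>n. real n * q ^ n) sums (q / (1 - q)\<^sup>2)"
proof -
  have "(\<lambda>n. q * (real (Suc n) * q ^ n)) sums (q * (1 / (1 - q)\<^sup>2))"
    by (rule sums_mult[OF geometric_deriv_sums]) (use assms in auto)
  then have "(\<lambda>n. real (Suc n) * q ^ Suc n) sums (q / (1 - q)\<^sup>2)"
    by (simp add: algebra_simps)
  then show ?thesis
    using sums_Suc_iff[of "\<lambda>n. real n * q ^ n"] by simp
qed

lemma sums_of_nat_power2_mult_geometric:
  assumes q: "\<bar>q\<bar> < (1::real)"
  shows "(\<lambda>n. (real n)\<^sup>2 * q ^ n) sums (q * (1 + q) / (1 - q) ^ 3)"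
proof -
  have "1 - q \<noteq> 0"
    using q by simp
  have "((\<lambda>z. 1 / (1 - z)\<^sup>2) has_field_derivative 2 / (1 - q) ^ 3) (at q)"
    using \<open>1 - q \<noteq> 0\<close> by (auto intro!: derivative_eq_intros simp: divide_simps eval_nat_numeral)
  then have "(\<lambda>n. diffs (\<lambda>n. real (Suc n)) n * q ^ n) sums (2 / (1 - q) ^ 3)"
    by (intro termdiffs_sums_strong[where K = 1 and f = "\<lambda>z. 1 / (1 - z)\<^sup>2"] geometric_deriv_sums)
       (use q in auto)
  then have "(\<lambda>n. diffs (\<lambda>n. real (Suc n)) n * q ^ n - real (Suc n) * q ^ n)
      sums (2 / (1 - q) ^ 3 - 1 / (1 - q)\<^sup>2)"
    by (rule sums_diff[OF _ geometric_deriv_sums]) (use q in auto)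
  moreover have "diffs (\<lambda>n. real (Suc n)) n * q ^ n - real (Suc n) * q ^ n = (real (Suc n))\<^sup>2 * q ^ n" for n
    by (simp add: diffs_def algebra_simps power2_eq_square)
  moreover have "2 / r ^ 3 - 1 / r\<^sup>2 = (2 - r) / r ^ 3" if "r \<noteq> 0" for r :: real
    using that by (simp add: field_simps eval_nat_numeral)
  ultimately have "(\<lambda>n. q * ((real (Suc n))\<^sup>2 * q ^ n)) sums (q * ((1 + q) / (1 - q) ^ 3))"
    using \<open>1 - q \<noteq> 0\<close> by (intro sums_mult) simp
  then have "(\<lambda>n. (real (Suc n))\<^sup>2 * q ^ Suc n) sums (q * (1 + q) / (1 - q) ^ 3)"
    by (simp add: algebra_simps)
  then show ?thesis
    using sums_Suc_iff[of "\<lambda>n. (real n)\<^sup>2 * q ^ n"] by simp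
qed

lemma sums_centered_second_moment:
  fixes p :: "nat \<Rightarrow> real"
  assumes "p sums 1" and "(\<lambda>k. real k * p k) sums \<mu>" and "(\<lambda>k. (real k)\<^sup>2 * p k) sums m"
  shows "(\<lambda>k. (real k - \<mu>)\<^sup>2 * p k) sums (m - \<mu>\<^sup>2)"
proof -
  have "(\<lambda>k. (real k)\<^sup>2 * p k - 2 * \<mu> * (real k * p k) + \<mu>\<^sup>2 * p k) sums (m - 2 * \<mu> * \<mu> + \<mu>\<^sup>2 * 1)"
    by (intro sums_add sums_diff sums_mult assms)
  then show ?thesis
    by (simp add: power2_eq_square algebra_simps)
qed

lemma fps_mult_const_minus_exp_nth:
  "fps_nth (Abs_fps x * (fps_const \<sigma> - fps_exp a)) k
     = \<sigma> * x k - (\<Sum>l = 0..k. x l * (a ^ (k - l) / fact (k - l)))"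
  for x :: "nat \<Rightarrow> real"
  by (simp add: algebra_simps fps_mult_nth mult_delta_right sum.delta')

lemma fps_const_minus_exp_nonzero:
  assumes "(\<sigma>::real) \<noteq> 1"
  shows "fps_const \<sigma> - fps_exp a \<noteq> 0"
proof
  assume "fps_const \<sigma> - fps_exp a = 0"
  then have "fps_nth (fps_const \<sigma> - fps_exp a) 0 = 0"
    by simp
  with assms show False
    by simp
qed

lemma fps_mult_const_minus_exp_of_recurrence:
  fixes \<rho> :: "nat \<Rightarrow> real"
  assumes rec: "\<And>k. k \<ge> 1 \<Longrightarrow> (\<sigma> - 1) * \<rho> k
      = \<sigma> * (a ^ k / fact k) * \<rho> 0 + (\<Sum>l = 1..k - 1. a ^ (k - l) / fact (k - l) * \<rho> l)"
  shows "Abs_fps \<rho> * (fps_const \<sigma> - fps_exp a) = fps_const ((\<sigma> - 1) * \<rho> 0) * fps_exp a"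
proof (rule fps_ext)
  fix k
  have "\<sigma> * \<rho> k - (\<Sum>l = 0..k. \<rho> l * (a ^ (k - l) / fact (k - l))) = (\<sigma> - 1) * \<rho> 0 * (a ^ k / fact k)"
  proof (cases k)
    case 0
    then show ?thesis by (simp add: algebra_simps)
  next
    case (Suc m)
    have "(\<Sum>l = 0..k. \<rho> l * (a ^ (k - l) / fact (k - l)))
        = \<rho> k + \<rho> 0 * (a ^ k / fact k) + (\<Sum>l = 1..m. a ^ (k - l) / fact (k - l) * \<rho> l)"
      unfolding Suc by (simp add: sum.atLeast0_atMost_Suc sum.atLeast_Suc_atMost[of 0 m] mult.commute)
    then show ?thesis
      using rec[of k] Suc by (simp add: algebra_simps diff_divide_distrib)
  qed
  then show "fps_nth (Abs_fps \<rho> * (fps_const \<sigma> - fps_exp a)) k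
      = fps_nth (fps_const ((\<sigma> - 1) * \<rho> 0) * fps_exp a) k"
    by (simp only: fps_mult_const_minus_exp_nth) simp
qed

lemma sum_exp_series_convolution:
  "(\<Sum>l = 0..k. x ^ l / fact l * (y ^ (k - l) / fact (k - l))) = (x + y) ^ k / fact (k::nat)"
  for x y :: real
proof -
  have "fps_nth (fps_exp x * fps_exp y) k = fps_nth (fps_exp (x + y)) k"
    by (simp add: fps_exp_add_mult)
  then show ?thesis
    by (simp add: fps_mult_nth mult.commute)
qed

definition rho_star :: "real \<Rightarrow> real \<Rightarrow> nat \<Rightarrow> real" where
  "rho_star \<sigma> a k = (\<sigma> * exp (-a) - 1) * (a ^ k / fact k) * (\<Sum>i. real (Suc i) ^ k / \<sigma> ^ Suc i)"

context
  fixes \<sigma> a :: real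
  assumes a_pos: "a > 0" and sigma_exp_gt_1: "\<sigma> * exp (-a) > 1"
begin

lemma exp_lt_sigma: "exp a < \<sigma>"
  using sigma_exp_gt_1 by (simp add: exp_minus field_simps)

lemma sigma_gt_1: "\<sigma> > 1"
  using exp_lt_sigma a_pos by (meson less_trans one_less_exp_iff)

lemma summable_rho_star_series: "summable (\<lambda>i. real (Suc i) ^ k / \<sigma> ^ Suc i)"
  using summable_power_div_power[OF sigma_gt_1, of k] by (rule summable_Suc_iff[THEN iffD2])

lemma rho_star_nonneg: "rho_star \<sigma> a k \<ge> 0"
  unfolding rho_star_def using sigma_exp_gt_1 sigma_gt_1 a_pos
  by (intro mult_nonneg_nonneg suminf_nonneg summable_rho_star_series) auto

lemma rho_star_convolution:
  "(\<Sum>l = 0..k. rho_star \<sigma> a l * (a ^ (k - l) / fact (k - l)))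
     = \<sigma> * rho_star \<sigma> a k - (\<sigma> * exp (-a) - 1) * (a ^ k / fact k)"
proof -
  define c where "c = \<sigma> * exp (-a) - 1"
  define e where "e l = a ^ l / fact l" for l
  define g where "g l i = real (Suc i) ^ l / \<sigma> ^ Suc i" for l i
  have \<sigma>: "\<sigma> > 0"
    using sigma_gt_1 by simp
  have summable: "summable (\<lambda>i. e l * e (k - l) * g l i)" for l
    unfolding g_def by (rule summable_mult[OF summable_rho_star_series])
  have "rho_star \<sigma> a l * e (k - l) = c * (\<Sum>i. e l * e (k - l) * g l i)" for l
  proof -
    have "(\<Sum>i. e l * e (k - l) * g l i) = e l * e (k - l) * (\<Sum>i. g l i)"
      unfolding g_def by (rule suminf_mult[OF summable_rho_star_series])
    then show ?thesis
      unfolding rho_star_def c_def e_def g_def by simp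
  qed
  then have "(\<Sum>l = 0..k. rho_star \<sigma> a l * e (k - l)) = c * (\<Sum>l = 0..k. \<Sum>i. e l * e (k - l) * g l i)"
    by (simp add: sum_distrib_left)
  also have "\<dots> = c * (\<Sum>i. \<Sum>l = 0..k. e l * e (k - l) * g l i)"
    using summable by (simp add: suminf_sum)
  also have "\<dots> = c * (\<Sum>i. (e k * \<sigma>) * g k (Suc i))"
  proof -
    have "(\<Sum>l = 0..k. e l * e (k - l) * g l i)
        = (\<Sum>l = 0..k. (a * real (Suc i)) ^ l / fact l * (a ^ (k - l) / fact (k - l))) / \<sigma> ^ Suc i" for i
      by (simp add: e_def g_def sum_divide_distrib power_mult_distrib ac_simps)
    also have "\<dots> i = (a * real (Suc i) + a) ^ k / fact k / \<sigma> ^ Suc i" for i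
      by (simp only: sum_exp_series_convolution)
    also have "\<dots> i = (e k * \<sigma>) * g k (Suc i)" for i
    proof -
      have "a * real (Suc i) + a = a * real (Suc (Suc i))"
        by (simp add: algebra_simps)
      then show ?thesis
        using \<sigma> by (simp only: e_def g_def power_mult_distrib) (simp add: field_simps)
    qed
    finally show ?thesis
      by simp
  qed
  also have "\<dots> = c * (e k * \<sigma>) * ((\<Sum>i. g k i) - 1 / \<sigma>)"
  proof -
    have "summable (g k)"
      unfolding g_def by (rule summable_rho_star_series)
    then have "(\<Sum>i. (e k * \<sigma>) * g k (Suc i)) = (e k * \<sigma>) * ((\<Sum>i. g k i) - g k 0)"
      by (simp add: suminf_mult suminf_split_head summable_Suc_iff)
    then show ?thesis
      by (simp add: g_def)
  qed
  also have "\<dots> = \<sigma> * rho_star \<sigma> a k - c * e k"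
    using \<sigma> by (simp add: rho_star_def c_def e_def g_def field_simps)
  finally show ?thesis
    unfolding c_def e_def .
qed

lemma fps_rho_star:
  "Abs_fps (rho_star \<sigma> a) * (fps_const \<sigma> - fps_exp a) = fps_const (\<sigma> * exp (-a) - 1) * fps_exp a"
  by (rule fps_ext, unfold fps_mult_const_minus_exp_nth rho_star_convolution) simp

lemma Abs_fps_rho_star:
  "Abs_fps (rho_star \<sigma> a) = fps_const (\<sigma> * exp (-a) - 1) * fps_exp a / (fps_const \<sigma> - fps_exp a)"
  using fps_rho_star fps_const_minus_exp_nonzero sigma_gt_1
  by (metis less_irrefl nonzero_mult_div_cancel_right)

text \<open>Tonelli: summing over \<open>k\<close> first turns \<open>(a i)\<^sup>k/k!\<close> into the exponential moments \<open>M (a i)\<close>.\<close>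

lemma rho_star_moment_sums:
  assumes w_nonneg: "\<And>k. w k \<ge> 0"
    and M: "\<And>x. x \<ge> 0 \<Longrightarrow> (\<lambda>k. w k * (x ^ k / fact k)) sums M x"
    and T: "(\<lambda>i. M (a * real (Suc i)) / \<sigma> ^ Suc i) sums T"
  shows "(\<lambda>k. w k * rho_star \<sigma> a k) sums ((\<sigma> * exp (-a) - 1) * T)"
proof -
  define c where "c = \<sigma> * exp (-a) - 1"
  define f where "f k i = w k * (c * (a ^ k / fact k)) * (real (Suc i) ^ k / \<sigma> ^ Suc i)" for k i
  have "(\<lambda>k. \<Sum>i. f k i) sums (c * T)"
  proof (rule sums_swap_nonneg)
    show "f k i \<ge> 0" for k i
      using w_nonneg[of k] sigma_exp_gt_1 sigma_gt_1 a_pos by (simp add: f_def c_def)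
    have "f k i = c / \<sigma> ^ Suc i * (w k * ((a * real (Suc i)) ^ k / fact k))" for k i
      by (simp add: f_def power_mult_distrib ac_simps)
    then show "(\<lambda>k. f k i) sums (c / \<sigma> ^ Suc i * M (a * real (Suc i)))" for i
      using a_pos by (simp only:) (intro sums_mult M, simp)
    show "(\<lambda>i. c / \<sigma> ^ Suc i * M (a * real (Suc i))) sums (c * T)"
      using sums_mult[OF T, of c] by simp
  qed
  moreover have "(\<Sum>i. f k i) = w k * rho_star \<sigma> a k" for k
  proof -
    have "(\<Sum>i. f k i) = w k * (c * (a ^ k / fact k)) * (\<Sum>i. real (Suc i) ^ k / \<sigma> ^ Suc i)"
      unfolding f_def by (rule suminf_mult[OF summable_rho_star_series])
    then show ?thesis
      by (simp add: rho_star_def c_def mult.assoc)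
  qed
  ultimately show ?thesis
    by (simp add: c_def)
qed

lemma exp_mult_div_sigma_power: "exp (a * real n) / \<sigma> ^ n = (1 / (\<sigma> * exp (-a))) ^ n"
  using exp_mult_of_nat_div_power[of a n \<sigma>] by (simp add: exp_minus field_simps)

lemma rho_star_sums_one: "rho_star \<sigma> a sums 1"
proof -
  define s where "s = \<sigma> * exp (-a)"
  have s: "s > 1"
    using sigma_exp_gt_1 by (simp add: s_def)
  have "(\<lambda>i. 1 / s * (1 / s) ^ i) sums (1 / s * (1 / (1 - 1 / s)))"
    using s by (intro sums_mult geometric_sums) auto
  then have "(\<lambda>i. exp (a * real (Suc i)) / \<sigma> ^ Suc i) sums (1 / (s - 1))"
    unfolding exp_mult_div_sigma_power s_def[symmetric] using s by (simp add: field_simps)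
  then have "(\<lambda>k. 1 * rho_star \<sigma> a k) sums ((s - 1) * (1 / (s - 1)))"
    unfolding s_def by (intro rho_star_moment_sums) (simp_all add: sums_exp_series)
  then show ?thesis
    using s by simp
qed

lemma rho_star_mean_sums:
  "(\<lambda>k. real k * rho_star \<sigma> a k) sums (\<sigma> * a * exp (-a) / (\<sigma> * exp (-a) - 1))"
proof -
  define s where "s = \<sigma> * exp (-a)"
  have s: "s > 1"
    using sigma_exp_gt_1 by (simp add: s_def)
  have "(\<lambda>n. real n * (1 / s) ^ n) sums ((1 / s) / (1 - 1 / s)\<^sup>2)"
    using s by (intro sums_of_nat_mult_geometric) auto
  then have "(\<lambda>i. a * (real (Suc i) * (1 / s) ^ Suc i)) sums (a * ((1 / s) / (1 - 1 / s)\<^sup>2))"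
    using sums_Suc_iff[of "\<lambda>n. real n * (1 / s) ^ n"] by (intro sums_mult) simp
  moreover have "a * real (Suc i) * exp (a * real (Suc i)) / \<sigma> ^ Suc i = a * (real (Suc i) * (1 / s) ^ Suc i)" for i
    by (simp only: mult.assoc times_divide_eq_right[symmetric] exp_mult_div_sigma_power s_def)
  ultimately have "(\<lambda>i. a * real (Suc i) * exp (a * real (Suc i)) / \<sigma> ^ Suc i) sums (a * ((1 / s) / (1 - 1 / s)\<^sup>2))"
    by presburger
  from rho_star_moment_sums[where M = "\<lambda>x. x * exp x", OF _ sums_of_nat_mult_exp_series this]
  have "(\<lambda>k. real k * rho_star \<sigma> a k) sums ((s - 1) * (a * ((1 / s) / (1 - 1 / s)\<^sup>2)))"
    by (simp add: s_def)
  moreover have "(s - 1) * (a * ((1 / s) / (1 - 1 / s)\<^sup>2)) = s * a / (s - 1)"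
  proof -
    have "1 - 1 / s = (s - 1) / s" "s - 1 > 0"
      using s by (simp_all add: field_simps)
    then show ?thesis
      using s by (simp add: power_divide field_simps) algebra
  qed
  ultimately show ?thesis
    by (simp add: s_def mult_ac)
qed

lemma rho_star_second_moment_sums:
  "(\<lambda>k. (real k)\<^sup>2 * rho_star \<sigma> a k) sums
     (\<sigma> * a * exp (-a) / (\<sigma> * exp (-a) - 1)
      + a\<^sup>2 * (\<sigma> * exp (-a)) * (\<sigma> * exp (-a) + 1) / (\<sigma> * exp (-a) - 1)\<^sup>2)"
proof -
  define s where "s = \<sigma> * exp (-a)"
  have s: "s > 1"
    using sigma_exp_gt_1 by (simp add: s_def)
  have "(\<lambda>n. real n * (1 / s) ^ n) sums ((1 / s) / (1 - 1 / s)\<^sup>2)"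
    using s by (intro sums_of_nat_mult_geometric) auto
  moreover have "(\<lambda>n. (real n)\<^sup>2 * (1 / s) ^ n) sums ((1 / s) * (1 + 1 / s) / (1 - 1 / s) ^ 3)"
    using s by (intro sums_of_nat_power2_mult_geometric) auto
  ultimately have "(\<lambda>i. a\<^sup>2 * ((real (Suc i))\<^sup>2 * (1 / s) ^ Suc i) + a * (real (Suc i) * (1 / s) ^ Suc i))
      sums (a\<^sup>2 * ((1 / s) * (1 + 1 / s) / (1 - 1 / s) ^ 3) + a * ((1 / s) / (1 - 1 / s)\<^sup>2))"
    using sums_Suc_iff[of "\<lambda>n. real n * (1 / s) ^ n"] sums_Suc_iff[of "\<lambda>n. (real n)\<^sup>2 * (1 / s) ^ n"]
    by (intro sums_add sums_mult) simp_all
  moreover have "a * real (Suc i) * (a * real (Suc i) + 1) * exp (a * real (Suc i)) / \<sigma> ^ Suc i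
      = a\<^sup>2 * ((real (Suc i))\<^sup>2 * (1 / s) ^ Suc i) + a * (real (Suc i) * (1 / s) ^ Suc i)" for i
  proof -
    have "a * real (Suc i) * (a * real (Suc i) + 1) * exp (a * real (Suc i)) / \<sigma> ^ Suc i
        = a * real (Suc i) * (a * real (Suc i) + 1) * (1 / s) ^ Suc i"
      by (simp only: mult.assoc times_divide_eq_right[symmetric] exp_mult_div_sigma_power s_def)
    also have "\<dots> = a\<^sup>2 * ((real (Suc i))\<^sup>2 * (1 / s) ^ Suc i) + a * (real (Suc i) * (1 / s) ^ Suc i)"
      by (simp only: power2_eq_square algebra_simps)
    finally show ?thesis .
  qed
  ultimately have "(\<lambda>i. a * real (Suc i) * (a * real (Suc i) + 1) * exp (a * real (Suc i)) / \<sigma> ^ Suc i)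
      sums (a\<^sup>2 * ((1 / s) * (1 + 1 / s) / (1 - 1 / s) ^ 3) + a * ((1 / s) / (1 - 1 / s)\<^sup>2))"
    by presburger
  from rho_star_moment_sums[where M = "\<lambda>x. x * (x + 1) * exp x", OF _ sums_of_nat_power2_mult_exp_series this]
  have "(\<lambda>k. (real k)\<^sup>2 * rho_star \<sigma> a k)
      sums ((s - 1) * (a\<^sup>2 * ((1 / s) * (1 + 1 / s) / (1 - 1 / s) ^ 3) + a * ((1 / s) / (1 - 1 / s)\<^sup>2)))"
    by (simp add: s_def)
  moreover have "(s - 1) * (a\<^sup>2 * ((1 / s) * (1 + 1 / s) / (1 - 1 / s) ^ 3) + a * ((1 / s) / (1 - 1 / s)\<^sup>2))
      = s * a / (s - 1) + a\<^sup>2 * s * (s + 1) / (s - 1)\<^sup>2"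
  proof -
    have "1 - 1 / s = (s - 1) / s" "1 + 1 / s = (s + 1) / s" "s - 1 > 0"
      using s by (simp_all add: field_simps)
    then show ?thesis
      using s by (simp add: power_divide field_simps) algebra
  qed
  ultimately show ?thesis
    by (simp add: s_def mult_ac)
qed

lemma rho_star_variance_sums:
  "(\<lambda>k. (real k - \<sigma> * a * exp (-a) / (\<sigma> * exp (-a) - 1))\<^sup>2 * rho_star \<sigma> a k) sums
     (\<sigma> * a * exp (-a) * (\<sigma> * exp (-a) + a - 1) / (\<sigma> * exp (-a) - 1)\<^sup>2)"
proof -
  define s where "s = \<sigma> * exp (-a)"
  have "s - 1 > 0"
    using sigma_exp_gt_1 by (simp add: s_def)
  then have "s * a / (s - 1) + a\<^sup>2 * s * (s + 1) / (s - 1)\<^sup>2 - (s * a / (s - 1))\<^sup>2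
      = s * a * (s + a - 1) / (s - 1)\<^sup>2"
    by (simp add: power_divide field_simps) algebra
  then show ?thesis
    using sums_centered_second_moment[OF rho_star_sums_one rho_star_mean_sums rho_star_second_moment_sums]
    by (simp add: s_def mult_ac)
qed

end

theorem mainTheorem2:
  fixes \<sigma> a :: real and \<rho> :: "nat \<Rightarrow> real"
  assumes "\<sigma> > 1" and "a > 0" and "\<sigma> * exp (-a) > 1"
    and rho0: "\<rho> 0 = (\<sigma> * exp (-a) - 1) / (\<sigma> - 1)"
    and rhok: "\<And>k. k \<ge> 1 \<Longrightarrow> \<rho> k =
        exp (-a) / ((\<sigma> - 1) * \<rho> 0 + 1 - exp (-a)) *
        (\<sigma> * (a ^ k / fact k) * \<rho> 0 + (\<Sum>l = 1..k-1. a ^ (k - l) / fact (k - l) * \<rho> l))"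
  shows "(Abs_fps \<rho> = fps_const (\<sigma> * exp (-a) - 1) * fps_exp a / (fps_const \<sigma> - fps_exp a)) \<and>
    (\<forall>k. \<rho> k = (\<sigma> * exp (-a) - 1) * (a ^ k / fact k) *
                      (\<Sum>i. real (Suc i) ^ k / \<sigma> ^ Suc i)) \<and>
    (\<forall>k. \<rho> k \<ge> 0) \<and>
    \<rho> sums 1 \<and>
    (\<lambda>k. real k * \<rho> k) sums (\<sigma> * a * exp (-a) / (\<sigma> * exp (-a) - 1)) \<and>
    (\<lambda>k. (real k - \<sigma> * a * exp (-a) / (\<sigma> * exp (-a) - 1))\<^sup>2 * \<rho> k) sums
           (\<sigma> * a * exp (-a) * (\<sigma> * exp (-a) + a - 1) / (\<sigma> * exp (-a) - 1)\<^sup>2)"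
proof -
  have \<rho>0: "(\<sigma> - 1) * \<rho> 0 = \<sigma> * exp (-a) - 1"
    using rho0 \<open>\<sigma> > 1\<close> by simp
  have "(\<sigma> - 1) * \<rho> k = \<sigma> * (a ^ k / fact k) * \<rho> 0 + (\<Sum>l = 1..k - 1. a ^ (k - l) / fact (k - l) * \<rho> l)"
    if "k \<ge> 1" for k
  proof -
    have "(\<sigma> - 1) * \<rho> 0 + 1 - exp (-a) = (\<sigma> - 1) * exp (-a)"
      using \<rho>0 by (simp add: algebra_simps)
    then show ?thesis
      using rhok[OF that] \<open>\<sigma> > 1\<close> by simp
  qed
  then have "Abs_fps \<rho> * (fps_const \<sigma> - fps_exp a) = Abs_fps (rho_star \<sigma> a) * (fps_const \<sigma> - fps_exp a)"
    using fps_mult_const_minus_exp_of_recurrence[of \<sigma> \<rho> a] fps_rho_star[OF \<open>a > 0\<close> \<open>\<sigma> * exp (-a) > 1\<close>]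
    by (simp add: \<rho>0)
  then have \<rho>: "\<rho> = rho_star \<sigma> a"
    using fps_const_minus_exp_nonzero[of \<sigma> a] \<open>\<sigma> > 1\<close> by (simp add: Abs_fps_inject)
  show ?thesis
    unfolding \<rho> using assms(2,3) Abs_fps_rho_star rho_star_def rho_star_nonneg rho_star_sums_one
      rho_star_mean_sums rho_star_variance_sums by blast
qed

end
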